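(* Let $(M,J,\nabla,\xi)$ be a conical special complex manifold and $A:=\nabla J$. Then $L_{J\xi}\nabla=A$, $L_{J\xi}A=-2JA$ and $L_{J\xi}(JA)=2A$.
   Context: A conical special complex manifold $(M,J,\nabla,\xi)$: complex manifold $(M,J)$ with a torsion-free flat connection $\nabla$ such that $A=\nabla J$ is symmetric ($A_XY=(\nabla_XJ)Y=A_YX$), and a nowhere-vanishing vector field $\xi$ with $\nabla\xi=\mathrm{Id}$ and $L_\xi J=0$. $(JA)_XY=J(A_XY)$; $L_{J\xi}\nabla$ is the Lie derivative of the connection, $(L_V\nabla)_XY=[V,\nabla_XY]-\nabla_{[V,X]}Y-\nabla_X[V,Y]$. *)

theory Defs
  imports "HOL-Analysis.Analysis"
begin

text \<open>Local model: the manifold M is represented by an open chart domain U in a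
finite-dimensional real vector space 'a. Vector fields are maps 'a \<Rightarrow> 'a
(only their values on U matter); (1,1)-tensor fields are maps p \<mapsto> (linear map);
an arbitrary affine connection is given by its Christoffel symbols
Gam p v w (bilinear in v, w):  nabla_X Y = dY(X) + Gam(X,Y).\<close>

fun diff_iter :: "'a::real_normed_vector list \<Rightarrow> ('a \<Rightarrow> 'b::real_normed_vector) \<Rightarrow> 'a \<Rightarrow> 'b" where
  "diff_iter [] f = f"
| "diff_iter (v # vs) f = (\<lambda>x. frechet_derivative (diff_iter vs f) (at x) v)"

definition smooth_on :: "'a::real_normed_vector set \<Rightarrow> ('a \<Rightarrow> 'b::real_normed_vector) \<Rightarrow> bool" where
  "smooth_on U f \<longleftrightarrow> (\<forall>vs. \<forall>x\<in>U. diff_iter vs f differentiable (at x))"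

definition smooth_endo_field :: "'a::euclidean_space set \<Rightarrow> ('a \<Rightarrow> 'a \<Rightarrow> 'a) \<Rightarrow> bool" where
  "smooth_endo_field U T \<longleftrightarrow> (\<forall>p\<in>U. linear (T p)) \<and> (\<forall>w. smooth_on U (\<lambda>p. T p w))"

definition smooth_christoffel :: "'a::euclidean_space set \<Rightarrow> ('a \<Rightarrow> 'a \<Rightarrow> 'a \<Rightarrow> 'a) \<Rightarrow> bool" where
  "smooth_christoffel U Gam \<longleftrightarrow> (\<forall>p\<in>U. bilinear (Gam p)) \<and> (\<forall>v w. smooth_on U (\<lambda>p. Gam p v w))"

definition ddir :: "('a::real_normed_vector \<Rightarrow> 'b::real_normed_vector) \<Rightarrow> 'a \<Rightarrow> 'a \<Rightarrow> 'b" where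
  "ddir f p v = frechet_derivative f (at p) v"

definition lie_bracket :: "('a::real_normed_vector \<Rightarrow> 'a) \<Rightarrow> ('a \<Rightarrow> 'a) \<Rightarrow> 'a \<Rightarrow> 'a" where
  "lie_bracket X Y = (\<lambda>p. ddir Y p (X p) - ddir X p (Y p))"

definition cov :: "('a::real_normed_vector \<Rightarrow> 'a \<Rightarrow> 'a \<Rightarrow> 'a) \<Rightarrow> ('a \<Rightarrow> 'a) \<Rightarrow> ('a \<Rightarrow> 'a) \<Rightarrow> 'a \<Rightarrow> 'a" where
  "cov Gam X Y = (\<lambda>p. ddir Y p (X p) + Gam p (X p) (Y p))"

definition app_endo :: "('a \<Rightarrow> 'a \<Rightarrow> 'a) \<Rightarrow> ('a \<Rightarrow> 'a) \<Rightarrow> 'a \<Rightarrow> 'a" where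
  "app_endo T Y = (\<lambda>p. T p (Y p))"

definition nablaJ :: "('a::real_normed_vector \<Rightarrow> 'a \<Rightarrow> 'a \<Rightarrow> 'a) \<Rightarrow> ('a \<Rightarrow> 'a \<Rightarrow> 'a) \<Rightarrow> ('a \<Rightarrow> 'a) \<Rightarrow> ('a \<Rightarrow> 'a) \<Rightarrow> 'a \<Rightarrow> 'a" where
  "nablaJ Gam J X Y = (\<lambda>p. cov Gam X (app_endo J Y) p - J p (cov Gam X Y p))"

definition torsion :: "('a::real_normed_vector \<Rightarrow> 'a \<Rightarrow> 'a \<Rightarrow> 'a) \<Rightarrow> ('a \<Rightarrow> 'a) \<Rightarrow> ('a \<Rightarrow> 'a) \<Rightarrow> 'a \<Rightarrow> 'a" where
  "torsion Gam X Y = (\<lambda>p. cov Gam X Y p - cov Gam Y X p - lie_bracket X Y p)"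

definition curvature :: "('a::real_normed_vector \<Rightarrow> 'a \<Rightarrow> 'a \<Rightarrow> 'a) \<Rightarrow> ('a \<Rightarrow> 'a) \<Rightarrow> ('a \<Rightarrow> 'a) \<Rightarrow> ('a \<Rightarrow> 'a) \<Rightarrow> 'a \<Rightarrow> 'a" where
  "curvature Gam X Y Z = (\<lambda>p. cov Gam X (cov Gam Y Z) p - cov Gam Y (cov Gam X Z) p
                              - cov Gam (lie_bracket X Y) Z p)"

definition nijenhuis :: "('a::real_normed_vector \<Rightarrow> 'a \<Rightarrow> 'a) \<Rightarrow> ('a \<Rightarrow> 'a) \<Rightarrow> ('a \<Rightarrow> 'a) \<Rightarrow> 'a \<Rightarrow> 'a" where
  "nijenhuis J X Y = (\<lambda>p. lie_bracket (app_endo J X) (app_endo J Y) p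
        - J p (lie_bracket (app_endo J X) Y p) - J p (lie_bracket X (app_endo J Y) p)
        - lie_bracket X Y p)"

definition lie_endo :: "('a::real_normed_vector \<Rightarrow> 'a) \<Rightarrow> ('a \<Rightarrow> 'a \<Rightarrow> 'a) \<Rightarrow> ('a \<Rightarrow> 'a) \<Rightarrow> 'a \<Rightarrow> 'a" where
  "lie_endo V T Y = (\<lambda>p. lie_bracket V (app_endo T Y) p - T p (lie_bracket V Y p))"

definition lie_conn :: "('a::real_normed_vector \<Rightarrow> 'a \<Rightarrow> 'a \<Rightarrow> 'a) \<Rightarrow> ('a \<Rightarrow> 'a) \<Rightarrow> ('a \<Rightarrow> 'a) \<Rightarrow> ('a \<Rightarrow> 'a) \<Rightarrow> 'a \<Rightarrow> 'a" where
  "lie_conn Gam V X Y = (\<lambda>p. lie_bracket V (cov Gam X Y) p - cov Gam (lie_bracket V X) Y p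
                              - cov Gam X (lie_bracket V Y) p)"

definition lie_12 :: "('a::real_normed_vector \<Rightarrow> 'a) \<Rightarrow> (('a \<Rightarrow> 'a) \<Rightarrow> ('a \<Rightarrow> 'a) \<Rightarrow> 'a \<Rightarrow> 'a) \<Rightarrow> ('a \<Rightarrow> 'a) \<Rightarrow> ('a \<Rightarrow> 'a) \<Rightarrow> 'a \<Rightarrow> 'a" where
  "lie_12 V B X Y = (\<lambda>p. lie_bracket V (B X Y) p - B (lie_bracket V X) Y p - B X (lie_bracket V Y) p)"

definition conical_special_complex ::
  "'a::euclidean_space set \<Rightarrow> ('a \<Rightarrow> 'a \<Rightarrow> 'a) \<Rightarrow> ('a \<Rightarrow> 'a \<Rightarrow> 'a \<Rightarrow> 'a) \<Rightarrow> ('a \<Rightarrow> 'a) \<Rightarrow> bool" where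
  "conical_special_complex U J Gam xi \<longleftrightarrow>
     open U \<and>
     \<comment> \<open>(U, J) complex: smooth almost complex structure with vanishing Nijenhuis tensor\<close>
     smooth_endo_field U J \<and> (\<forall>p\<in>U. \<forall>v. J p (J p v) = - v) \<and>
     (\<forall>X Y. smooth_on U X \<longrightarrow> smooth_on U Y \<longrightarrow> (\<forall>p\<in>U. nijenhuis J X Y p = 0)) \<and>
     \<comment> \<open>nabla: smooth connection, torsion-free and flat\<close>
     smooth_christoffel U Gam \<and>
     (\<forall>X Y. smooth_on U X \<longrightarrow> smooth_on U Y \<longrightarrow> (\<forall>p\<in>U. torsion Gam X Y p = 0)) \<and>
     (\<forall>X Y Z. smooth_on U X \<longrightarrow> smooth_on U Y \<longrightarrow> smooth_on U Z \<longrightarrow>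
        (\<forall>p\<in>U. curvature Gam X Y Z p = 0)) \<and>
     \<comment> \<open>A = nabla J is symmetric\<close>
     (\<forall>X Y. smooth_on U X \<longrightarrow> smooth_on U Y \<longrightarrow> (\<forall>p\<in>U. nablaJ Gam J X Y p = nablaJ Gam J Y X p)) \<and>
     \<comment> \<open>xi: smooth, nowhere vanishing, nabla xi = Id, L_xi J = 0\<close>
     smooth_on U xi \<and> (\<forall>p\<in>U. xi p \<noteq> 0) \<and>
     (\<forall>X. smooth_on U X \<longrightarrow> (\<forall>p\<in>U. cov Gam X xi p = X p)) \<and>
     (\<forall>Y. smooth_on U Y \<longrightarrow> (\<forall>p\<in>U. lie_endo xi J Y p = 0))"

end

theory Submission
  imports Defs
begin

text \<open>Torsion-freeness turns \<open>L\<^sub>\<xi> J = 0\<close> and \<open>\<nabla>\<xi> = Id\<close> into \<open>A\<^sub>\<xi> = 0\<close>, so by the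
symmetry of \<open>A\<close> we get \<open>\<nabla>\<^sub>Z(J\<xi>) = J Z\<close>. For a flat torsion-free connection
\<open>(L\<^sub>V\<nabla>)\<^sub>X Y = \<nabla>\<^sub>X\<nabla>\<^sub>Y V - \<nabla>\<^bsub>\<nabla>\<^sub>XY\<^esub> V\<close>, which for \<open>V = J\<xi>\<close> is \<open>A\<^sub>X Y\<close>.
The Nijenhuis tensor with one argument \<open>\<xi>\<close> shows \<open>L\<^bsub>J\<xi>\<^esub> J = 0\<close>, so \<open>L\<^bsub>J\<xi>\<^esub>\<close> commutes
with \<open>J\<close> and \<open>(L\<^bsub>J\<xi>\<^esub>A)\<^sub>X = (L\<^bsub>J\<xi>\<^esub>\<nabla>)\<^sub>X J - J (L\<^bsub>J\<xi>\<^esub>\<nabla>)\<^sub>X = A\<^sub>X J - J A\<^sub>X = -2 J A\<^sub>X\<close>,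
because \<open>J\<^sup>2 = -1\<close> forces \<open>A\<^sub>X J = - J A\<^sub>X\<close>; finally \<open>L\<^bsub>J\<xi>\<^esub>(JA) = J L\<^bsub>J\<xi>\<^esub>A = 2A\<close>.\<close>

section \<open>Smooth maps on an open set\<close>

lemma frechet_derivative_cong_open:
  assumes "open U" "x \<in> U" "\<And>y. y \<in> U \<Longrightarrow> f y = g y"
  shows "frechet_derivative f (at x) = frechet_derivative g (at x)"
proof -
  have "(f has_derivative D) (at x) \<longleftrightarrow> (g has_derivative D) (at x)" for D
    using has_derivative_transform_within_open[OF _ assms(1,2), of f D UNIV g]
      has_derivative_transform_within_open[OF _ assms(1,2), of g D UNIV f] assms(3) by auto
  then show ?thesis
    unfolding frechet_derivative_def by simp
qed

lemma differentiable_cong_open: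
  assumes "open U" "x \<in> U" "\<And>y. y \<in> U \<Longrightarrow> f y = g y" "f differentiable (at x)"
  shows "g differentiable (at x)"
  using assms has_derivative_transform_within_open unfolding differentiable_def by metis

lemma frechet_derivative_diff:
  assumes "f differentiable (at x)" "g differentiable (at x)"
  shows "frechet_derivative (\<lambda>y. f y - g y) (at x) =
    (\<lambda>v. frechet_derivative f (at x) v - frechet_derivative g (at x) v)"
  using assms by (intro frechet_derivative_at[symmetric] has_derivative_diff)
    (simp_all add: frechet_derivative_works[symmetric])

lemma frechet_derivative_minus:
  assumes "f differentiable (at x)"
  shows "frechet_derivative (\<lambda>y. - f y) (at x) = (\<lambda>v. - frechet_derivative f (at x) v)"
  using assms by (intro frechet_derivative_at[symmetric] has_derivative_minus)
    (simp add: frechet_derivative_works[symmetric])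

lemma linear_basis_expansion:
  assumes "linear L"
  shows "L w = (\<Sum>i\<in>Basis. (w \<bullet> i) *\<^sub>R L i)"
  by (subst euclidean_representation[symmetric, of w])
    (simp add: linear_sum[OF assms] linear_scale[OF assms])

lemma diff_iter_snoc: "diff_iter (vs @ [v]) f = diff_iter vs (\<lambda>x. frechet_derivative f (at x) v)"
  by (induction vs) auto

lemma diff_iter_cong_open:
  assumes "open U" "\<And>y. y \<in> U \<Longrightarrow> f y = g y" "x \<in> U"
  shows "diff_iter vs f x = diff_iter vs g x"
  using assms(3)
proof (induction vs arbitrary: x)
  case Nil
  then show ?case using assms(2) by simp
next
  case (Cons v vs)
  then show ?case
    using frechet_derivative_cong_open[OF assms(1) Cons.prems, of "diff_iter vs f"] by simp
qed

lemma smooth_on_cong_open: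
  assumes "open U" "\<And>y. y \<in> U \<Longrightarrow> f y = g y" "smooth_on U f"
  shows "smooth_on U g"
  unfolding smooth_on_def
proof (intro allI ballI)
  fix vs x assume "x \<in> U"
  then have "diff_iter vs f differentiable (at x)"
    using assms(3) unfolding smooth_on_def by blast
  then show "diff_iter vs g differentiable (at x)"
    using diff_iter_cong_open[OF assms(1,2)]
    by (rule differentiable_cong_open[OF assms(1) \<open>x \<in> U\<close>, rotated])
qed

lemma all_list_snoc_iff: "(\<forall>xs. P xs) \<longleftrightarrow> P [] \<and> (\<forall>x xs. P (xs @ [x]))"
proof (intro iffI allI)
  fix xs assume "P [] \<and> (\<forall>x xs. P (xs @ [x]))"
  then show "P xs" by (cases xs rule: rev_exhaust) auto
qed simp

lemma smooth_on_unfold: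
  "smooth_on U f \<longleftrightarrow> (\<forall>x\<in>U. f differentiable (at x)) \<and>
     (\<forall>v. smooth_on U (\<lambda>x. frechet_derivative f (at x) v))"
  unfolding smooth_on_def all_list_snoc_iff[of "\<lambda>vs. \<forall>x\<in>U. diff_iter vs f differentiable (at x)"]
  by (simp only: diff_iter_snoc diff_iter.simps(1))

lemma smooth_on_differentiable: "smooth_on U f \<Longrightarrow> x \<in> U \<Longrightarrow> f differentiable (at x)"
  using smooth_on_unfold by blast

lemma smooth_on_frechet_derivative:
  "smooth_on U f \<Longrightarrow> smooth_on U (\<lambda>x. frechet_derivative f (at x) v)"
  using smooth_on_unfold by blast

lemma smooth_on_coinduct:
  assumes "open U" and "P f"
    and differentiable: "\<And>f x. P f \<Longrightarrow> x \<in> U \<Longrightarrow> f differentiable (at x)"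
    and derivative: "\<And>f v. P f \<Longrightarrow> \<exists>g. P g \<and> (\<forall>x\<in>U. g x = frechet_derivative f (at x) v)"
  shows "smooth_on U f"
proof -
  have iterates: "\<forall>f. P f \<longrightarrow> (\<forall>x\<in>U. diff_iter vs f differentiable (at x))" for vs
  proof (induction vs rule: rev_induct)
    case Nil
    show ?case
      unfolding diff_iter.simps(1) using differentiable by blast
  next
    case (snoc v vs)
    show ?case
    proof (intro allI impI ballI)
      fix f x assume "P f" "x \<in> U"
      obtain g where "P g" and g: "\<forall>x\<in>U. g x = frechet_derivative f (at x) v"
        using derivative[where v = v, OF \<open>P f\<close>] by blast
      have "diff_iter vs g differentiable (at x)"
        using snoc[rule_format, OF \<open>P g\<close> \<open>x \<in> U\<close>] .
      moreover have "diff_iter vs g y = diff_iter vs (\<lambda>x. frechet_derivative f (at x) v) y"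
        if "y \<in> U" for y
        using diff_iter_cong_open[OF \<open>open U\<close> bspec[OF g] that] .
      ultimately show "diff_iter (vs @ [v]) f differentiable (at x)"
        unfolding diff_iter_snoc by (rule differentiable_cong_open[OF \<open>open U\<close> \<open>x \<in> U\<close>, rotated])
    qed
  qed
  show ?thesis
    unfolding smooth_on_def
  proof (intro allI ballI)
    fix vs x assume "x \<in> U"
    then show "diff_iter vs f differentiable (at x)"
      using iterates[of vs] \<open>P f\<close> by blast
  qed
qed

lemma smooth_on_const: "open U \<Longrightarrow> smooth_on U (\<lambda>x. c)"
  by (rule smooth_on_coinduct[where P = "\<lambda>f. \<exists>c. f = (\<lambda>x. c)"]) auto

lemma smooth_on_add:
  assumes "open U" "smooth_on U f" "smooth_on U g"
  shows "smooth_on U (\<lambda>x. f x + g x)"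
proof (rule smooth_on_coinduct[where P = "\<lambda>h. \<exists>f g. smooth_on U f \<and> smooth_on U g \<and> h = (\<lambda>x. f x + g x)"])
  show "open U" by fact
  show "\<exists>f' g'. smooth_on U f' \<and> smooth_on U g' \<and> (\<lambda>x. f x + g x) = (\<lambda>x. f' x + g' x)"
    using assms(2,3) by blast
  fix h assume "\<exists>f g. smooth_on U f \<and> smooth_on U g \<and> h = (\<lambda>x. f x + g x)"
  then obtain f g where f: "smooth_on U f" and g: "smooth_on U g" and h: "h = (\<lambda>x. f x + g x)"
    by blast
  have derivative: "(h has_derivative (\<lambda>v. frechet_derivative f (at x) v + frechet_derivative g (at x) v)) (at x)"
    if "x \<in> U" for x
    unfolding h using smooth_on_differentiable[OF f that] smooth_on_differentiable[OF g that]
    by (intro has_derivative_add) (simp_all only: frechet_derivative_works[symmetric])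
  show "h differentiable (at x)" if "x \<in> U" for x
    using derivative[OF that] by (rule differentiableI)
  show "\<exists>h'. (\<exists>f g. smooth_on U f \<and> smooth_on U g \<and> h' = (\<lambda>x. f x + g x))
      \<and> (\<forall>x\<in>U. h' x = frechet_derivative h (at x) v)" for v
  proof (intro exI conjI ballI)
    show "smooth_on U (\<lambda>x. frechet_derivative f (at x) v)" "smooth_on U (\<lambda>x. frechet_derivative g (at x) v)"
      using f g by (simp_all add: smooth_on_frechet_derivative)
    show "frechet_derivative f (at x) v + frechet_derivative g (at x) v = frechet_derivative h (at x) v"
      if "x \<in> U" for x
      unfolding frechet_derivative_at[OF derivative[OF that], symmetric] ..
  qed (rule refl)
qed

lemma smooth_on_bounded_linear:
  assumes "open U" "bounded_linear L" "smooth_on U f"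
  shows "smooth_on U (\<lambda>x. L (f x))"
proof (rule smooth_on_coinduct[where P = "\<lambda>h. \<exists>f. smooth_on U f \<and> h = (\<lambda>x. L (f x))"])
  show "open U" by fact
  show "\<exists>f'. smooth_on U f' \<and> (\<lambda>x. L (f x)) = (\<lambda>x. L (f' x))"
    using assms(3) by blast
  have derivative: "((\<lambda>x. L (f x)) has_derivative (\<lambda>v. L (frechet_derivative f (at x) v))) (at x)"
    if "smooth_on U f" "x \<in> U" for f x
    using bounded_linear.has_derivative[OF assms(2)] smooth_on_differentiable[OF that]
      frechet_derivative_works by blast
  fix h assume "\<exists>f. smooth_on U f \<and> h = (\<lambda>x. L (f x))"
  then obtain f where f: "smooth_on U f" and h: "h = (\<lambda>x. L (f x))" by blast
  show "h differentiable (at x)" if "x \<in> U" for x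
    unfolding h using derivative[OF f that] by (rule differentiableI)
  show "\<exists>g. (\<exists>f. smooth_on U f \<and> g = (\<lambda>x. L (f x))) \<and> (\<forall>x\<in>U. g x = frechet_derivative h (at x) v)"
    for v
  proof (intro exI conjI ballI)
    show "smooth_on U (\<lambda>x. frechet_derivative f (at x) v)"
      using smooth_on_frechet_derivative[OF f] .
    show "L (frechet_derivative f (at x) v) = frechet_derivative h (at x) v" if "x \<in> U" for x
      unfolding h frechet_derivative_at[OF derivative[OF f that], symmetric] ..
  qed (rule refl)
qed

lemma smooth_on_minus: "open U \<Longrightarrow> smooth_on U f \<Longrightarrow> smooth_on U (\<lambda>x. - f x)"
  using smooth_on_bounded_linear[OF _ bounded_linear_minus[OF bounded_linear_ident]] by blast

lemma smooth_on_diff: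
  "open U \<Longrightarrow> smooth_on U f \<Longrightarrow> smooth_on U g \<Longrightarrow> smooth_on U (\<lambda>x. f x - g x)"
  using smooth_on_add[OF _ _ smooth_on_minus, of U f g] by simp

lemma smooth_on_sum:
  assumes "open U" "finite S" "\<And>i. i \<in> S \<Longrightarrow> smooth_on U (f i)"
  shows "smooth_on U (\<lambda>x. \<Sum>i\<in>S. f i x)"
  using assms(2,3) by (induction S rule: finite_induct) (simp_all add: smooth_on_const smooth_on_add assms(1))

text \<open>Smooth maps are closed under bilinear products because finite sums of products of smooth
maps form a class that the product rule keeps closed under differentiation.\<close>

inductive sum_of_products ::
  "'a::real_normed_vector set \<Rightarrow> ('b::real_normed_vector \<Rightarrow> 'c::real_normed_vector \<Rightarrow> 'd::real_normed_vector)
    \<Rightarrow> ('a \<Rightarrow> 'd) \<Rightarrow> bool"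
  for U bprod where
  product: "smooth_on U f \<Longrightarrow> smooth_on U g \<Longrightarrow> sum_of_products U bprod (\<lambda>x. bprod (f x) (g x))"
| add: "sum_of_products U bprod h \<Longrightarrow> sum_of_products U bprod k \<Longrightarrow> sum_of_products U bprod (\<lambda>x. h x + k x)"

lemma sum_of_products_has_derivative:
  assumes "bounded_bilinear bprod" "sum_of_products U bprod h"
  shows "\<exists>D. (\<forall>x\<in>U. (h has_derivative D x) (at x)) \<and> (\<forall>v. sum_of_products U bprod (\<lambda>x. D x v))"
  using assms(2)
proof induction
  case (product f g)
  let ?D = "\<lambda>x v. bprod (f x) (frechet_derivative g (at x) v) + bprod (frechet_derivative f (at x) v) (g x)"
  have "((\<lambda>x. bprod (f x) (g x)) has_derivative ?D x) (at x)" if "x \<in> U" for x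
    using smooth_on_differentiable[OF product(1) that] smooth_on_differentiable[OF product(2) that]
    by (intro bounded_bilinear.FDERIV[OF assms(1)]) (simp_all only: frechet_derivative_works[symmetric])
  moreover have "sum_of_products U bprod (\<lambda>x. ?D x v)" for v
    using product by (intro sum_of_products.intros smooth_on_frechet_derivative)
  ultimately show ?case by (intro exI[of _ ?D]) blast
next
  case (add h k)
  then obtain Dh Dk where
    "\<forall>x\<in>U. (h has_derivative Dh x) (at x)" "\<forall>v. sum_of_products U bprod (\<lambda>x. Dh x v)"
    "\<forall>x\<in>U. (k has_derivative Dk x) (at x)" "\<forall>v. sum_of_products U bprod (\<lambda>x. Dk x v)"
    by blast
  then have "\<forall>x\<in>U. ((\<lambda>x. h x + k x) has_derivative (\<lambda>v. Dh x v + Dk x v)) (at x)"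
    and "\<forall>v. sum_of_products U bprod (\<lambda>x. Dh x v + Dk x v)"
    by (simp_all add: has_derivative_add sum_of_products.add)
  then show ?case by (intro exI[of _ "\<lambda>x v. Dh x v + Dk x v"]) blast
qed

lemma sum_of_products_smooth:
  assumes "open U" "bounded_bilinear bprod" "sum_of_products U bprod h"
  shows "smooth_on U h"
  using assms(1,3)
proof (rule smooth_on_coinduct)
  fix h x assume "sum_of_products U bprod h" "x \<in> U"
  then show "h differentiable (at x)"
    using sum_of_products_has_derivative[OF assms(2)] differentiableI by blast
next
  fix h v assume "sum_of_products U bprod h"
  then obtain D where D: "\<forall>x\<in>U. (h has_derivative D x) (at x)" "sum_of_products U bprod (\<lambda>x. D x v)"
    using sum_of_products_has_derivative[OF assms(2)] by blast
  have "\<forall>x\<in>U. D x v = frechet_derivative h (at x) v"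
    using D(1) frechet_derivative_at by metis
  then show "\<exists>g. sum_of_products U bprod g \<and> (\<forall>x\<in>U. g x = frechet_derivative h (at x) v)"
    using D(2) by blast
qed

lemma smooth_on_bounded_bilinear:
  "open U \<Longrightarrow> bounded_bilinear bprod \<Longrightarrow> smooth_on U f \<Longrightarrow> smooth_on U g \<Longrightarrow>
    smooth_on U (\<lambda>x. bprod (f x) (g x))"
  by (rule sum_of_products_smooth[OF _ _ sum_of_products.product])

lemma smooth_on_scaleR:
  "open U \<Longrightarrow> smooth_on U f \<Longrightarrow> smooth_on U g \<Longrightarrow> smooth_on U (\<lambda>x. f x *\<^sub>R g x)"
  by (rule smooth_on_bounded_bilinear[OF _ bounded_bilinear_scaleR])

lemma smooth_on_apply_linear_field:
  fixes T :: "'a::real_normed_vector \<Rightarrow> 'b::euclidean_space \<Rightarrow> 'c::real_normed_vector"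
  assumes "open U" "\<And>p. p \<in> U \<Longrightarrow> linear (T p)" "\<And>i. i \<in> Basis \<Longrightarrow> smooth_on U (\<lambda>p. T p i)"
    and "smooth_on U X"
  shows "smooth_on U (\<lambda>p. T p (X p))"
proof (rule smooth_on_cong_open[OF assms(1)])
  show "(\<Sum>i\<in>Basis. (X p \<bullet> i) *\<^sub>R T p i) = T p (X p)" if "p \<in> U" for p
    by (rule linear_basis_expansion[OF assms(2)[OF that], symmetric])
  show "smooth_on U (\<lambda>p. \<Sum>i\<in>Basis. (X p \<bullet> i) *\<^sub>R T p i)"
    using assms(1,3,4)
    by (intro smooth_on_sum smooth_on_scaleR smooth_on_bounded_linear[OF _ bounded_linear_inner_left] finite_Basis)
qed

lemma smooth_on_ddir:
  fixes f :: "'a::euclidean_space \<Rightarrow> 'b::real_normed_vector"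
  assumes "open U" "smooth_on U f" "smooth_on U X"
  shows "smooth_on U (\<lambda>p. ddir f p (X p))"
  unfolding ddir_def
proof (rule smooth_on_apply_linear_field[where T = "\<lambda>p. frechet_derivative f (at p)", OF assms(1) _ _ assms(3)])
  show "linear (frechet_derivative f (at p))" if "p \<in> U" for p
    using linear_frechet_derivative[OF smooth_on_differentiable[OF assms(2) that]] .
  show "smooth_on U (\<lambda>p. frechet_derivative f (at p) i)" for i
    using smooth_on_frechet_derivative[OF assms(2)] .
qed

lemma smooth_on_app_endo:
  assumes "open U" "smooth_endo_field U J" "smooth_on U X"
  shows "smooth_on U (app_endo J X)"
  unfolding app_endo_def using assms(2) unfolding smooth_endo_field_def
  by (intro smooth_on_apply_linear_field[where T = J, OF assms(1) _ _ assms(3)]) auto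

lemma smooth_on_christoffel:
  assumes "open U" "smooth_christoffel U Gam" "smooth_on U X" "smooth_on U Y"
  shows "smooth_on U (\<lambda>p. Gam p (X p) (Y p))"
proof (rule smooth_on_apply_linear_field[where T = "\<lambda>p. Gam p (X p)", OF assms(1) _ _ assms(4)])
  have bilinear: "bilinear (Gam p)" if "p \<in> U" for p
    using assms(2) that unfolding smooth_christoffel_def by blast
  show "linear (Gam p (X p))" if "p \<in> U" for p
    using bilinear[OF that] unfolding bilinear_def by blast
  show "smooth_on U (\<lambda>p. Gam p (X p) j)" for j
  proof (rule smooth_on_apply_linear_field[where T = "\<lambda>p v. Gam p v j", OF assms(1) _ _ assms(3)])
    show "linear (\<lambda>v. Gam p v j)" if "p \<in> U" for p
      using bilinear[OF that] unfolding bilinear_def by blast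
    show "smooth_on U (\<lambda>p. Gam p i j)" for i
      using assms(2) unfolding smooth_christoffel_def by blast
  qed
qed

lemma smooth_on_cov:
  assumes "open U" "smooth_christoffel U Gam" "smooth_on U X" "smooth_on U Y"
  shows "smooth_on U (cov Gam X Y)"
  unfolding cov_def
  by (rule smooth_on_add[OF assms(1) smooth_on_ddir[OF assms(1,4,3)] smooth_on_christoffel[OF assms]])

lemma smooth_on_nablaJ:
  assumes "open U" "smooth_christoffel U Gam" "smooth_endo_field U J" "smooth_on U X" "smooth_on U Y"
  shows "smooth_on U (nablaJ Gam J X Y)"
proof -
  have "smooth_on U (\<lambda>p. cov Gam X (app_endo J Y) p - app_endo J (cov Gam X Y) p)"
    using assms by (intro smooth_on_diff smooth_on_cov smooth_on_app_endo)
  then show ?thesis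
    unfolding nablaJ_def app_endo_def .
qed

section \<open>Covariant and Lie derivatives\<close>

lemma cov_cong_open:
  assumes "open U" "p \<in> U" "\<And>q. q \<in> U \<Longrightarrow> Y q = Y' q"
  shows "cov Gam X Y p = cov Gam X Y' p"
  using frechet_derivative_cong_open[OF assms] assms(2,3) unfolding cov_def ddir_def by simp

lemma cov_diff:
  assumes "bilinear (Gam p)" "Y differentiable (at p)" "Z differentiable (at p)"
  shows "cov Gam X (\<lambda>q. Y q - Z q) p = cov Gam X Y p - cov Gam X Z p"
  unfolding cov_def ddir_def frechet_derivative_diff[OF assms(2,3)]
  using bilinear_rsub[OF assms(1)] by simp

lemma cov_minus:
  assumes "bilinear (Gam p)" "Y differentiable (at p)"
  shows "cov Gam X (\<lambda>q. - Y q) p = - cov Gam X Y p"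
  unfolding cov_def ddir_def frechet_derivative_minus[OF assms(2)]
  using bilinear_rneg[OF assms(1)] by simp

lemma lie_bracket_diff:
  assumes "V differentiable (at p)" "W differentiable (at p)" "Z differentiable (at p)"
  shows "lie_bracket V (\<lambda>q. W q - Z q) p = lie_bracket V W p - lie_bracket V Z p"
  unfolding lie_bracket_def ddir_def frechet_derivative_diff[OF assms(2,3)]
  using linear_diff[OF linear_frechet_derivative[OF assms(1)]] by simp

lemma lie_bracket_eq_cov_diff:
  "torsion Gam X Y q = 0 \<Longrightarrow> lie_bracket X Y q = cov Gam X Y q - cov Gam Y X q"
  unfolding torsion_def by (simp add: algebra_simps)

lemma lie_conn_flat_torsion_free:
  fixes Gam :: "'a::euclidean_space \<Rightarrow> 'a \<Rightarrow> 'a \<Rightarrow> 'a"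
  assumes U: "open U" and Gam: "smooth_christoffel U Gam"
    and torsion_free: "\<And>X Y q. smooth_on U X \<Longrightarrow> smooth_on U Y \<Longrightarrow> q \<in> U \<Longrightarrow> torsion Gam X Y q = 0"
    and flat: "\<And>X Y Z q. smooth_on U X \<Longrightarrow> smooth_on U Y \<Longrightarrow> smooth_on U Z \<Longrightarrow> q \<in> U \<Longrightarrow>
      curvature Gam X Y Z q = 0"
    and V: "smooth_on U V" and X: "smooth_on U X" and Y: "smooth_on U Y" and p: "p \<in> U"
  shows "lie_conn Gam V X Y p = cov Gam X (cov Gam Y V) p - cov Gam (cov Gam X Y) V p"
proof -
  note bracket = lie_bracket_eq_cov_diff[OF torsion_free]
  have bilinear: "bilinear (Gam p)"
    using Gam p unfolding smooth_christoffel_def by blast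
  have "cov Gam X (lie_bracket V Y) p = cov Gam X (\<lambda>q. cov Gam V Y q - cov Gam Y V q) p"
    using bracket[OF V Y] by (intro cov_cong_open[OF U p])
  also have "\<dots> = cov Gam X (cov Gam V Y) p - cov Gam X (cov Gam Y V) p"
    using U Gam V Y p
    by (intro cov_diff bilinear smooth_on_differentiable[OF smooth_on_cov])
  finally have "cov Gam X (lie_bracket V Y) p = cov Gam X (cov Gam V Y) p - cov Gam X (cov Gam Y V) p" .
  moreover have "lie_bracket V (cov Gam X Y) p = cov Gam V (cov Gam X Y) p - cov Gam (cov Gam X Y) V p"
    using bracket[OF V smooth_on_cov[OF U Gam X Y] p] .
  moreover have "cov Gam V (cov Gam X Y) p - cov Gam X (cov Gam V Y) p - cov Gam (lie_bracket V X) Y p = 0"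
    using flat[OF V X Y p] unfolding curvature_def .
  ultimately show ?thesis
    unfolding lie_conn_def by (simp add: algebra_simps)
qed

lemma nablaJ_app_endo:
  assumes "open U" "p \<in> U" "bilinear (Gam p)" "linear (J p)" "\<And>q v. q \<in> U \<Longrightarrow> J q (J q v) = - v"
    and "Y differentiable (at p)"
  shows "nablaJ Gam J X (app_endo J Y) p = - J p (nablaJ Gam J X Y p)"
proof -
  have "cov Gam X (app_endo J (app_endo J Y)) p = cov Gam X (\<lambda>q. - Y q) p"
    using assms(5) by (intro cov_cong_open[OF assms(1,2)]) (simp add: app_endo_def)
  also have "\<dots> = - cov Gam X Y p"
    by (rule cov_minus[of Gam p, OF assms(3,6)])
  finally show ?thesis
    unfolding nablaJ_def using linear_diff[OF assms(4)] assms(2,5) by simp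
qed

lemma lie_12_app_endo:
  assumes "linear (J p)" "lie_bracket V (app_endo J (B X Y)) p = J p (lie_bracket V (B X Y) p)"
  shows "lie_12 V (\<lambda>X' Y'. app_endo J (B X' Y')) X Y p = J p (lie_12 V B X Y p)"
  unfolding lie_12_def assms(2) by (simp add: app_endo_def linear_diff[OF assms(1)])

lemma lie_12_nablaJ:
  fixes J :: "'a::euclidean_space \<Rightarrow> 'a \<Rightarrow> 'a"
  assumes U: "open U" and Gam: "smooth_christoffel U Gam" and J: "smooth_endo_field U J"
    and V: "smooth_on U V" and X: "smooth_on U X" and Y: "smooth_on U Y" and p: "p \<in> U"
    and J_invariant: "\<And>W q. smooth_on U W \<Longrightarrow> q \<in> U \<Longrightarrow> lie_bracket V (app_endo J W) q = J q (lie_bracket V W q)"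
  shows "lie_12 V (nablaJ Gam J) X Y p =
    lie_conn Gam V X (app_endo J Y) p - J p (lie_conn Gam V X Y p)"
proof -
  have linear: "linear (J p)"
    using J p unfolding smooth_endo_field_def by blast
  have smooth: "smooth_on U (cov Gam X (app_endo J Y))" "smooth_on U (app_endo J (cov Gam X Y))"
    using smooth_on_cov[OF U Gam X smooth_on_app_endo[OF U J Y]]
      smooth_on_app_endo[OF U J smooth_on_cov[OF U Gam X Y]] .
  have "lie_bracket V (nablaJ Gam J X Y) p
      = lie_bracket V (\<lambda>q. cov Gam X (app_endo J Y) q - app_endo J (cov Gam X Y) q) p"
    unfolding nablaJ_def app_endo_def ..
  also have "\<dots> = lie_bracket V (cov Gam X (app_endo J Y)) p - J p (lie_bracket V (cov Gam X Y) p)"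
    using lie_bracket_diff[OF smooth_on_differentiable[OF V p] smooth_on_differentiable[OF smooth(1) p]
        smooth_on_differentiable[OF smooth(2) p]] J_invariant[OF smooth_on_cov[OF U Gam X Y] p]
    by simp
  finally have "lie_bracket V (nablaJ Gam J X Y) p
      = lie_bracket V (cov Gam X (app_endo J Y)) p - J p (lie_bracket V (cov Gam X Y) p)" .
  moreover have "cov Gam X (lie_bracket V (app_endo J Y)) p = cov Gam X (app_endo J (lie_bracket V Y)) p"
    using J_invariant[OF Y] by (intro cov_cong_open[OF U p]) (simp add: app_endo_def)
  ultimately show ?thesis
    unfolding lie_12_def lie_conn_def nablaJ_def
    by (simp add: linear_diff[OF linear] linear_add[OF linear] app_endo_def algebra_simps)
qed

section \<open>Conical special complex charts\<close>

locale conical_special_complex_chart =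
  fixes U :: "'a::euclidean_space set" and J :: "'a \<Rightarrow> 'a \<Rightarrow> 'a"
    and Gam :: "'a \<Rightarrow> 'a \<Rightarrow> 'a \<Rightarrow> 'a" and xi :: "'a \<Rightarrow> 'a"
  assumes conical_special_complex: "conical_special_complex U J Gam xi"
begin

lemma open_U: "open U"
  and J_smooth: "smooth_endo_field U J"
  and J_squared: "q \<in> U \<Longrightarrow> J q (J q v) = - v"
  and nijenhuis_zero: "smooth_on U X \<Longrightarrow> smooth_on U Y \<Longrightarrow> q \<in> U \<Longrightarrow> nijenhuis J X Y q = 0"
  and Gam_smooth: "smooth_christoffel U Gam"
  and torsion_free: "smooth_on U X \<Longrightarrow> smooth_on U Y \<Longrightarrow> q \<in> U \<Longrightarrow> torsion Gam X Y q = 0"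
  and flat: "smooth_on U X \<Longrightarrow> smooth_on U Y \<Longrightarrow> smooth_on U Z \<Longrightarrow> q \<in> U \<Longrightarrow> curvature Gam X Y Z q = 0"
  and nablaJ_symmetric:
    "smooth_on U X \<Longrightarrow> smooth_on U Y \<Longrightarrow> q \<in> U \<Longrightarrow> nablaJ Gam J X Y q = nablaJ Gam J Y X q"
  and xi_smooth: "smooth_on U xi"
  and cov_xi: "smooth_on U X \<Longrightarrow> q \<in> U \<Longrightarrow> cov Gam X xi q = X q"
  and lie_endo_xi_J: "smooth_on U Y \<Longrightarrow> q \<in> U \<Longrightarrow> lie_endo xi J Y q = 0"
  using conical_special_complex unfolding conical_special_complex_def by simp_all

lemma J_linear: "q \<in> U \<Longrightarrow> linear (J q)"
  using J_smooth unfolding smooth_endo_field_def by blast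

lemma Gam_bilinear: "q \<in> U \<Longrightarrow> bilinear (Gam q)"
  using Gam_smooth unfolding smooth_christoffel_def by blast

lemma lie_bracket_eq_cov:
  assumes "smooth_on U X" "smooth_on U Y" "q \<in> U"
  shows "lie_bracket X Y q = cov Gam X Y q - cov Gam Y X q"
  by (rule lie_bracket_eq_cov_diff[OF torsion_free[OF assms]])

lemma lie_bracket_xi_app_endo:
  assumes "smooth_on U Y" "q \<in> U"
  shows "lie_bracket xi (app_endo J Y) q = J q (lie_bracket xi Y q)"
  using lie_endo_xi_J[OF assms] unfolding lie_endo_def by simp

lemma nablaJ_xi:
  assumes Z: "smooth_on U Z" and q: "q \<in> U"
  shows "nablaJ Gam J xi Z q = 0"
proof -
  have JZ: "smooth_on U (app_endo J Z)"
    using smooth_on_app_endo[OF open_U J_smooth Z] .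
  have "lie_bracket xi (app_endo J Z) q = cov Gam xi (app_endo J Z) q - J q (Z q)"
    using lie_bracket_eq_cov[OF xi_smooth JZ q] cov_xi[OF JZ q] unfolding app_endo_def by simp
  moreover have "J q (lie_bracket xi Z q) = J q (cov Gam xi Z q) - J q (Z q)"
    using lie_bracket_eq_cov[OF xi_smooth Z q] cov_xi[OF Z q] linear_diff[OF J_linear[OF q]] by simp
  ultimately show ?thesis
    using lie_bracket_xi_app_endo[OF Z q] unfolding nablaJ_def by simp
qed

lemma cov_J_xi:
  assumes Z: "smooth_on U Z" and q: "q \<in> U"
  shows "cov Gam Z (app_endo J xi) q = J q (Z q)"
  using nablaJ_symmetric[OF Z xi_smooth q] nablaJ_xi[OF Z q] cov_xi[OF Z q]
  unfolding nablaJ_def by simp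

lemma lie_bracket_J_xi_app_endo:
  assumes W: "smooth_on U W" and q: "q \<in> U"
  shows "lie_bracket (app_endo J xi) (app_endo J W) q = J q (lie_bracket (app_endo J xi) W q)"
  using nijenhuis_zero[OF xi_smooth W q] lie_bracket_xi_app_endo[OF W q] J_squared[OF q]
  unfolding nijenhuis_def by (simp add: algebra_simps)

lemma lie_conn_J_xi:
  assumes X: "smooth_on U X" and Y: "smooth_on U Y" and p: "p \<in> U"
  shows "lie_conn Gam (app_endo J xi) X Y p = nablaJ Gam J X Y p"
proof -
  have "cov Gam X (cov Gam Y (app_endo J xi)) p = cov Gam X (app_endo J Y) p"
    using cov_J_xi[OF Y] by (intro cov_cong_open[OF open_U p]) (simp add: app_endo_def)
  moreover have "cov Gam (cov Gam X Y) (app_endo J xi) p = J p (cov Gam X Y p)"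
    using cov_J_xi[OF smooth_on_cov[OF open_U Gam_smooth X Y] p] .
  ultimately show ?thesis
    using lie_conn_flat_torsion_free[OF open_U Gam_smooth torsion_free flat
        smooth_on_app_endo[OF open_U J_smooth xi_smooth] X Y p]
    unfolding nablaJ_def by simp
qed

lemma lie_12_J_xi_nablaJ:
  assumes X: "smooth_on U X" and Y: "smooth_on U Y" and p: "p \<in> U"
  shows "lie_12 (app_endo J xi) (nablaJ Gam J) X Y p = - 2 *\<^sub>R J p (nablaJ Gam J X Y p)"
proof -
  have "lie_12 (app_endo J xi) (nablaJ Gam J) X Y p
      = nablaJ Gam J X (app_endo J Y) p - J p (nablaJ Gam J X Y p)"
    using lie_12_nablaJ[OF open_U Gam_smooth J_smooth smooth_on_app_endo[OF open_U J_smooth xi_smooth]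
        X Y p lie_bracket_J_xi_app_endo]
    unfolding lie_conn_J_xi[OF X smooth_on_app_endo[OF open_U J_smooth Y] p] lie_conn_J_xi[OF X Y p] .
  also have "\<dots> = - 2 *\<^sub>R J p (nablaJ Gam J X Y p)"
    using nablaJ_app_endo[of U p Gam J, OF open_U p Gam_bilinear[OF p] J_linear[OF p] J_squared
        smooth_on_differentiable[OF Y p]]
    by (simp add: scaleR_2)
  finally show ?thesis .
qed

lemma lie_12_J_xi_J_nablaJ:
  assumes X: "smooth_on U X" and Y: "smooth_on U Y" and p: "p \<in> U"
  shows "lie_12 (app_endo J xi) (\<lambda>X' Y'. app_endo J (nablaJ Gam J X' Y')) X Y p = 2 *\<^sub>R nablaJ Gam J X Y p"
proof -
  have "lie_12 (app_endo J xi) (\<lambda>X' Y'. app_endo J (nablaJ Gam J X' Y')) X Y p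
      = J p (lie_12 (app_endo J xi) (nablaJ Gam J) X Y p)"
    using lie_bracket_J_xi_app_endo[OF smooth_on_nablaJ[OF open_U Gam_smooth J_smooth X Y] p]
    by (rule lie_12_app_endo[where B = "nablaJ Gam J" and J = J and p = p, OF J_linear[OF p]])
  also have "\<dots> = 2 *\<^sub>R nablaJ Gam J X Y p"
    unfolding lie_12_J_xi_nablaJ[OF X Y p] linear_scale[OF J_linear[OF p]] J_squared[OF p] by simp
  finally show ?thesis .
qed

end

theorem lemma2p4:
  fixes U :: "'a::euclidean_space set"
    and J :: "'a \<Rightarrow> 'a \<Rightarrow> 'a"
    and Gam :: "'a \<Rightarrow> 'a \<Rightarrow> 'a \<Rightarrow> 'a"
    and xi :: "'a \<Rightarrow> 'a"
  assumes "conical_special_complex U J Gam xi"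
  shows "\<forall>X Y. smooth_on U X \<longrightarrow> smooth_on U Y \<longrightarrow> (\<forall>p\<in>U.
            lie_conn Gam (app_endo J xi) X Y p = nablaJ Gam J X Y p
          \<and> lie_12 (app_endo J xi) (nablaJ Gam J) X Y p = - 2 *\<^sub>R J p (nablaJ Gam J X Y p)
          \<and> lie_12 (app_endo J xi) (\<lambda>X' Y'. app_endo J (nablaJ Gam J X' Y')) X Y p
              = 2 *\<^sub>R nablaJ Gam J X Y p)"
proof -
  interpret conical_special_complex_chart U J Gam xi
    using assms by unfold_locales
  show ?thesis
    using lie_conn_J_xi lie_12_J_xi_nablaJ lie_12_J_xi_J_nablaJ by blast
qed

end
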